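(* Let $f:\mathbb{R}^d\to\mathbb{R}$ be $\beta$-smooth with a minimizer $w^\star$, and run AdaSGD (as defined in the context) for $T$ steps with parameters $\eta,\gamma>0$ using a stochastic gradient oracle with bounded affine noise with parameters $\sigma_0,\sigma_1\ge0$. Let $\bar d_t=\max_{s\le t}\|w_s-w^\star\|$ and $\bar d'_t=\max\{\bar d_t,\eta\}$. Then for any $\delta\in(0,1)$, with probability at least $1-\delta$, for all $t\le T$, $$\sum_{s=1}^t\hat\eta_s(\nabla f(w_s)-g_s)\cdot(w_s-w^\star)\le2\bar d'_t\sqrt{A_t\big(\tfrac{\delta}{\log(4T)}\big)\sum_{s\le t}\eta_{s-1}^2\|\nabla f(w_s)-g_s\|^2+\eta^2\Big(\frac{\sigma_0}{\gamma}+\sigma_1\Big)^2B_t\big(\tfrac{\delta}{\log(4T)}\big)},$$ where $A_t(\delta')=16\log\big(\frac{60\log(6t)}{\delta'}\big)$ and $B_t(\delta')=16\log^2\big(\frac{60\log(6t)}{\delta'}\big)$.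
   Context: $\|\cdot\|$ is the Euclidean norm and $\log$ the base-2 logarithm. $\beta$-smooth: $\|\nabla f(x)-\nabla f(y)\|\le\beta\|x-y\|$. Oracle: queried at $w$, returns random $g(w)$ with $\mathbb{E}[g(w)\mid w]=\nabla f(w)$ and, with probability one, $\|g(w)-\nabla f(w)\|^2\le\sigma_0^2+\sigma_1^2\|\nabla f(w)\|^2$. AdaSGD: arbitrary $w_1$; for $t=1,\dots,T$, $g_t=g(w_t)$ a fresh oracle answer ($\mathbb{E}[g_t\mid g_1,\dots,g_{t-1}]=\nabla f(w_t)$), $G_t=\sqrt{\gamma^2+\sum_{s=1}^t\|g_s\|^2}$ (so $G_0=\gamma$), $\eta_t=\eta/G_t$ (so $\eta_0=\eta/\gamma$), $w_{t+1}=w_t-\eta_tg_t$. Decorrelated step sizes: $\hat\eta_s=\eta/\sqrt{G_{s-1}^2+\|\nabla f(w_s)\|^2}$. *)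

theory Defs
  imports "HOL-Probability.Probability"
begin

definition smooth :: "real \<Rightarrow> ('a::euclidean_space \<Rightarrow> 'a) \<Rightarrow> bool" where
  "smooth \<beta> gradf \<longleftrightarrow> (\<forall>x y. norm (gradf x - gradf y) \<le> \<beta> * norm (x - y))"

definition adaG :: "real \<Rightarrow> (nat \<Rightarrow> 'w \<Rightarrow> 'a::real_normed_vector) \<Rightarrow> 'w \<Rightarrow> nat \<Rightarrow> real" where
  "adaG \<gamma> g \<omega> t = sqrt (\<gamma>\<^sup>2 + (\<Sum>s\<in>{1..t}. (norm (g s \<omega>))\<^sup>2))"

text \<open>AdaSGD iterates, paper indexing: adaW .. 1 = w_1, adaW .. (t+1) = w_t - (eta/G_t) g_t
  for t >= 1. The value at index 0 is a dummy (set to w_1) and never used.\<close>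
primrec adaW :: "'a::real_normed_vector \<Rightarrow> real \<Rightarrow> real \<Rightarrow> (nat \<Rightarrow> 'w \<Rightarrow> 'a) \<Rightarrow> 'w \<Rightarrow> nat \<Rightarrow> 'a" where
  "adaW w1 \<eta> \<gamma> g \<omega> 0 = w1"
| "adaW w1 \<eta> \<gamma> g \<omega> (Suc t) =
     (if t = 0 then w1 else adaW w1 \<eta> \<gamma> g \<omega> t - (\<eta> / adaG \<gamma> g \<omega> t) *\<^sub>R g t \<omega>)"

definition past :: "'w measure \<Rightarrow> (nat \<Rightarrow> 'w \<Rightarrow> 'a::topological_space) \<Rightarrow> nat \<Rightarrow> 'w measure" where
  "past M g t = sigma (space M) (\<Union>s\<in>{1..<t}. {g s -` A \<inter> space M | A. A \<in> sets borel})"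

definition hat_eta :: "real \<Rightarrow> real \<Rightarrow> ('a::euclidean_space \<Rightarrow> 'a) \<Rightarrow> 'a \<Rightarrow> (nat \<Rightarrow> 'w \<Rightarrow> 'a) \<Rightarrow> 'w \<Rightarrow> nat \<Rightarrow> real" where
  "hat_eta \<eta> \<gamma> gradf w1 g \<omega> s =
     \<eta> / sqrt ((adaG \<gamma> g \<omega> (s - 1))\<^sup>2 + (norm (gradf (adaW w1 \<eta> \<gamma> g \<omega> s)))\<^sup>2)"

definition A_fn :: "nat \<Rightarrow> real \<Rightarrow> real" where
  "A_fn t \<delta>' = 16 * log 2 (60 * log 2 (6 * real t) / \<delta>')"

definition B_fn :: "nat \<Rightarrow> real \<Rightarrow> real" where
  "B_fn t \<delta>' = 16 * (log 2 (60 * log 2 (6 * real t) / \<delta>'))\<^sup>2"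

end

theory Submission
  imports Defs
begin

(* Dividing the s-th summand by the running radius d'_s gives increments Z_s that form
   a martingale difference sequence for the natural filtration (the decorrelated step size hat-eta_s
   is known before g_s is drawn), are bounded by c = eta (sigma0 / gamma + sigma1) by the affine
   noise bound, and whose squares are dominated by eta_{s-1}^2 |grad f(w_s) - g_s|^2.  For every
   theta with theta c <= 1/2 the process exp (theta sum Z - theta^2 sum Z^2) is a supermartingale, so
   by Ville's inequality it ever exceeds e^L with probability at most e^-L.  A union bound over the
   O(log T) scales theta_k = 1 / (2 c 2^k), choosing for each outcome the scale adapted to its
   quadratic variation, bounds all partial sums of the Z_s by the square root in the theorem;
   summation by parts against the nondecreasing weights d'_s gives the factor 2 d'_t. *)

lemma ln_one_plus_ge_diff_square:
  fixes x :: real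
  assumes "-(1/2) \<le> x" "x \<le> 1"
  shows "x - x\<^sup>2 \<le> ln (1 + x)"
proof (cases "0 \<le> x")
  case True
  then show ?thesis using assms by (intro ln_one_plus_pos_lower_bound)
next
  case False
  define h where "h y = ln (1 + y) - y + y\<^sup>2" for y :: real
  have "h 0 \<le> h x"
  proof (rule DERIV_nonpos_imp_nonincreasing[of x 0 h])
    show "x \<le> 0" using False by simp
    fix y assume y: "x \<le> y" "y \<le> 0"
    then have y1: "0 < 1 + y" using assms by linarith
    have "(h has_real_derivative (1 / (1 + y) - 1 + 2 * y)) (at y)"
      unfolding h_def using y1 by (auto intro!: derivative_eq_intros)
    moreover have "1 / (1 + y) - 1 + 2 * y = y * (1 + 2 * y) / (1 + y)"
      using y1 by (simp add: field_simps)
    moreover have "y * (1 + 2 * y) / (1 + y) \<le> 0"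
      using y assms y1 by (intro divide_nonpos_pos mult_nonpos_nonneg) auto
    ultimately show "\<exists>d. (h has_real_derivative d) (at y) \<and> d \<le> 0" by auto
  qed
  then show ?thesis by (simp add: h_def)
qed

lemma exp_diff_square_le_one_plus:
  fixes x :: real
  assumes "\<bar>x\<bar> \<le> 1/2"
  shows "exp (x - x\<^sup>2) \<le> 1 + x"
proof -
  have "x - x\<^sup>2 \<le> ln (1 + x)" using assms by (intro ln_one_plus_ge_diff_square) auto
  then show ?thesis using assms by (simp add: ln_ge_iff)
qed

lemma summation_by_parts_le:
  fixes D z :: "nat \<Rightarrow> real"
  assumes mono: "\<And>s. 1 \<le> s \<Longrightarrow> s < t \<Longrightarrow> D s \<le> D (Suc s)"
    and nonneg: "0 \<le> D 1" and t: "1 \<le> t"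
    and partial_sums: "\<And>s. s \<in> {1..t} \<Longrightarrow> \<bar>\<Sum>r\<in>{1..s}. z r\<bar> \<le> R"
  shows "(\<Sum>s\<in>{1..t}. D s * z s) \<le> 2 * D t * R"
proof -
  have step: "(\<Sum>s\<in>{1..Suc k}. D s * z s)
      \<le> D (Suc k) * (\<Sum>r\<in>{1..Suc k}. z r) + (D (Suc k) - D 1) * R \<and> D 1 \<le> D (Suc k)"
    if "Suc k \<le> t" for k
    using that
  proof (induction k)
    case (Suc k)
    define S where "S = (\<Sum>r\<in>{1..Suc k}. z r)"
    have "- S \<le> R" using partial_sums[of "Suc k"] Suc.prems by (simp add: S_def)
    moreover have "0 \<le> D (Suc (Suc k)) - D (Suc k)" using mono[of "Suc k"] Suc.prems by simp
    ultimately have "(D (Suc (Suc k)) - D (Suc k)) * (- S) \<le> (D (Suc (Suc k)) - D (Suc k)) * R"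
      by (rule mult_left_mono)
    then show ?case using Suc mono[of "Suc k"]
      by (simp add: sum.nat_ivl_Suc'[of 1 "Suc k"] S_def algebra_simps)
  qed simp
  obtain k where k: "t = Suc k" using t by (cases t) auto
  have "0 \<le> R" and S: "(\<Sum>r\<in>{1..t}. z r) \<le> R" using partial_sums[of t] t by auto
  have "(\<Sum>s\<in>{1..t}. D s * z s) \<le> D t * (\<Sum>r\<in>{1..t}. z r) + (D t - D 1) * R"
    using step[of k] k by simp
  also have "\<dots> \<le> D t * R + D t * R"
    using S step[of k] k nonneg \<open>0 \<le> R\<close> by (intro add_mono mult_left_mono mult_right_mono) auto
  finally show ?thesis by (simp add: mult_ac)
qed

lemma ex_power_of_two_bracket:
  fixes x :: real
  assumes "1 \<le> x"
  shows "\<exists>k::nat. 2 ^ k \<le> x \<and> x < 2 ^ Suc k"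
proof -
  obtain n :: nat where "x < 2 ^ n" using real_arch_pow[of 2 x] by auto
  define m where "m = (LEAST n::nat. x < 2 ^ n)"
  have m: "x < 2 ^ m" unfolding m_def by (rule LeastI) fact
  then obtain k where k: "m = Suc k" using assms by (cases m) auto
  then have "\<not> x < 2 ^ k" unfolding m_def by (intro not_less_Least) simp
  then show ?thesis using m k by (intro exI[of _ k]) auto
qed

text \<open>Take k = 0 if W is small, and otherwise the k with 2^k \<le> sqrt W / (2 c sqrt L) < 2^(k+1),
  which balances the two terms.\<close>
lemma ex_grid_scale:
  fixes L c W :: real and T :: nat
  assumes L: "1 \<le> L" and c: "0 < c" and W: "0 \<le> W" "W \<le> real T * c\<^sup>2" and T: "1 \<le> T"
  shows "\<exists>k::nat. 4 ^ k < 4 * real T \<and>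
    L * (2 * c * 2 ^ k) + W / (2 * c * 2 ^ k) \<le> max (4 * c * L) (3 * sqrt (L * W))"
proof (cases "W \<le> 4 * c\<^sup>2 * L")
  case True
  then have "W / (2 * c) \<le> 2 * c * L" using c by (simp add: field_simps power2_eq_square)
  then have "L * (2 * c * 2 ^ 0) + W / (2 * c * 2 ^ 0) \<le> 4 * c * L" by (simp add: algebra_simps)
  then have "L * (2 * c * 2 ^ 0) + W / (2 * c * 2 ^ 0) \<le> max (4 * c * L) (3 * sqrt (L * W))"
    by (rule max.coboundedI1)
  moreover have "(4::real) ^ 0 < 4 * real T" using T by simp
  ultimately show ?thesis by blast
next
  case False
  define u where "u = sqrt L"
  define v where "v = sqrt W"
  have u: "0 < u" "L = u\<^sup>2" using L by (auto simp: u_def)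
  have v: "0 \<le> v" "W = v\<^sup>2" using W by (auto simp: v_def)
  have sqrt_LW: "sqrt (L * W) = u * v" by (simp add: real_sqrt_mult u_def v_def)
  have "(2 * c * u)\<^sup>2 < v\<^sup>2" using False u v by (simp add: power_mult_distrib)
  then have "2 * c * u < v" using v(1) by (rule power_less_imp_less_base)
  then have "1 \<le> v / (2 * c * u)" using u c by simp
  then obtain k where k: "2 ^ k \<le> v / (2 * c * u)" "v / (2 * c * u) < 2 ^ Suc k"
    using ex_power_of_two_bracket by blast
  define a :: real where "a = 2 ^ k"
  have a: "0 < a" "a * (2 * c * u) \<le> v" "v < 2 * a * (2 * c * u)"
    using k u c by (simp_all add: a_def field_simps)
  have "L * (2 * c * a) \<le> u * v" using a(2) u by (simp add: power2_eq_square mult_ac)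
  moreover have "W / (2 * c * a) \<le> 2 * u * v"
  proof -
    have "v\<^sup>2 \<le> 2 * a * (2 * c * u) * v" using a(3) v by (simp add: power2_eq_square mult_right_mono)
    then show ?thesis using v u c a(1) by (simp add: field_simps)
  qed
  ultimately have "L * (2 * c * 2 ^ k) + W / (2 * c * 2 ^ k) \<le> 3 * sqrt (L * W)"
    unfolding sqrt_LW a_def by linarith
  moreover have "(4::real) ^ k < 4 * real T"
  proof -
    have "a\<^sup>2 \<le> (v / (2 * c * u))\<^sup>2" using k(1) a(1) by (simp add: a_def power_mono)
    also have "\<dots> = W / (4 * c\<^sup>2 * L)" using u v by (simp add: power_divide power_mult_distrib)
    also have "\<dots> \<le> real T * c\<^sup>2 / (4 * c\<^sup>2 * 1)" using W L c by (intro frac_le) auto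
    also have "\<dots> = real T / 4" using c by simp
    finally have "a\<^sup>2 \<le> real T / 4" .
    moreover have "a\<^sup>2 = 4 ^ k" by (simp add: a_def power2_eq_square power_mult_distrib[symmetric])
    ultimately show ?thesis using T by simp
  qed
  ultimately show ?thesis by (metis max.coboundedI2)
qed

lemma abs_le_of_grid_deviation_bounds:
  fixes S V W L c :: real and T :: nat
  assumes L: "1 \<le> L" and c: "0 < c" and T: "1 \<le> T"
    and V: "0 \<le> V" "V \<le> W" and W: "W \<le> real T * c\<^sup>2"
    and deviation: "\<And>k::nat. 4 ^ k < 4 * real T \<Longrightarrow>
      1 / (2 * c * 2 ^ k) * S - (1 / (2 * c * 2 ^ k))\<^sup>2 * V < L \<and>
      1 / (2 * c * 2 ^ k) * - S - (1 / (2 * c * 2 ^ k))\<^sup>2 * V < L"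
  shows "\<bar>S\<bar> \<le> max (4 * c * L) (3 * sqrt (L * W))"
proof -
  obtain k :: nat where k: "4 ^ k < 4 * real T"
    and scale: "L * (2 * c * 2 ^ k) + W / (2 * c * 2 ^ k) \<le> max (4 * c * L) (3 * sqrt (L * W))"
    using ex_grid_scale[OF L c _ W T] V by auto
  define a :: real where "a = 2 * c * 2 ^ k"
  have a: "0 < a" using c by (simp add: a_def)
  have "\<bar>S\<bar> / a < L + V / a\<^sup>2"
    using deviation[OF k] by (cases "0 \<le> S") (auto simp: a_def power_one_over)
  then have "\<bar>S\<bar> \<le> L * a + V / a" using a by (simp add: field_simps power2_eq_square)
  also have "\<dots> \<le> L * a + W / a" using a V by (simp add: divide_right_mono)
  also have "\<dots> \<le> max (4 * c * L) (3 * sqrt (L * W))" using scale by (simp add: a_def)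
  finally show ?thesis .
qed

lemma max_le_sqrt_log_radius:
  fixes c L l W Y :: real
  assumes "0 < c" "1 \<le> L" "L \<le> l" "0 \<le> W" "W \<le> Y"
  shows "max (4 * c * L) (3 * sqrt (L * W)) \<le> sqrt (16 * l * Y + c\<^sup>2 * (16 * l\<^sup>2))"
proof -
  have l: "0 \<le> l" and lY: "0 \<le> 16 * l * Y" using assms by auto
  have "4 * c * L \<le> sqrt (c\<^sup>2 * (16 * l\<^sup>2))"
    using assms l by (simp add: real_sqrt_mult power_mult_distrib real_sqrt_abs)
  also have "\<dots> \<le> sqrt (16 * l * Y + c\<^sup>2 * (16 * l\<^sup>2))" using lY by simp
  finally have "4 * c * L \<le> sqrt (16 * l * Y + c\<^sup>2 * (16 * l\<^sup>2))" .
  moreover have "3 * sqrt (L * W) \<le> sqrt (16 * l * Y + c\<^sup>2 * (16 * l\<^sup>2))"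
  proof -
    have "sqrt (L * W) \<le> sqrt (l * Y)" using assms by (intro real_sqrt_le_mono mult_mono) auto
    moreover have "0 \<le> sqrt (L * W)" using assms by simp
    ultimately have "3 * sqrt (L * W) \<le> 4 * sqrt (l * Y)" by linarith
    also have "\<dots> = sqrt (16 * l * Y)" by (simp add: real_sqrt_mult)
    also have "\<dots> \<le> sqrt (16 * l * Y + c\<^sup>2 * (16 * l\<^sup>2))" by simp
    finally show ?thesis .
  qed
  ultimately show ?thesis by simp
qed

lemma two_le_log2_four_mult:
  fixes T :: nat
  assumes "1 \<le> T"
  shows "2 \<le> log 2 (4 * real T)"
proof -
  have "log 2 (2 ^ 2) \<le> log 2 (4 * real T)" using assms by simp
  then show ?thesis by (simp only: log_pow_cancel)
qed

lemma one_le_ln_confidence: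
  fixes T :: nat and \<delta> :: real
  assumes "1 \<le> T" "0 < \<delta>" "\<delta> < 1"
  shows "1 \<le> ln (60 * log 2 (4 * real T) / \<delta>)"
proof -
  have lT: "2 \<le> log 2 (4 * real T)" using assms(1) by (rule two_le_log2_four_mult)
  have "exp 1 \<le> (3::real)" using exp_le by simp
  also have "3 \<le> 60 * log 2 (4 * real T)" using lT by simp
  also have "\<dots> \<le> 60 * log 2 (4 * real T) / \<delta>"
    using assms lT by (simp add: le_divide_eq mult_left_le)
  finally show ?thesis using lT assms by (subst ln_ge_iff) auto
qed

lemma ln_confidence_le_log2:
  fixes t T :: nat and \<delta> :: real
  assumes "1 \<le> t" "1 \<le> T" "0 < \<delta>" "\<delta> < 1"
  shows "ln (60 * log 2 (4 * real T) / \<delta>)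
    \<le> log 2 (60 * log 2 (6 * real t) / (\<delta> / log 2 (4 * real T)))"
proof -
  define Y where "Y = 60 * log 2 (4 * real T) / \<delta>"
  have "1 \<le> log 2 (6 * real t)" using assms by (subst le_log_iff) auto
  moreover have Y: "1 \<le> Y"
  proof (rule ln_ge_zero_imp_ge_one)
    show "0 \<le> ln Y" using one_le_ln_confidence[OF assms(2-4)] by (simp add: Y_def)
    show "0 < Y" using two_le_log2_four_mult[OF assms(2)] assms by (simp add: Y_def)
  qed
  ultimately have YX: "Y \<le> Y * log 2 (6 * real t)" by (simp add: mult_le_cancel_left1)
  then have "ln Y \<le> ln (Y * log 2 (6 * real t))" using Y by simp
  also have "\<dots> \<le> ln (Y * log 2 (6 * real t)) / ln 2"
  proof -
    have "0 \<le> ln (Y * log 2 (6 * real t))" using Y YX by (intro ln_ge_zero) linarith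
    then show ?thesis using ln_2_less_1 by (simp add: le_divide_eq mult_left_le)
  qed
  finally show ?thesis by (simp add: Y_def log_def field_simps)
qed

lemma card_geometric_grid:
  fixes T :: nat
  assumes "1 \<le> T"
  shows "finite {k::nat. 4 ^ k < 4 * real T}"
    and "real (card {k::nat. 4 ^ k < 4 * real T}) \<le> 2 * log 2 (4 * real T)"
proof -
  define n where "n = nat \<lceil>log 2 (4 * real T)\<rceil>"
  have sub: "{k::nat. 4 ^ k < 4 * real T} \<subseteq> {..<n}"
  proof
    fix k assume "k \<in> {k::nat. 4 ^ k < 4 * real T}"
    moreover have "(2::real) ^ k \<le> 4 ^ k" by (intro power_mono) auto
    ultimately have "log 2 (2 ^ k) < log 2 (4 * real T)" using assms by (subst log_less_cancel_iff) auto
    then show "k \<in> {..<n}" unfolding n_def by (simp add: less_ceiling_iff zless_nat_eq_int_zless)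
  qed
  then show "finite {k::nat. 4 ^ k < 4 * real T}" by (rule finite_subset) simp
  have "real (card {k::nat. 4 ^ k < 4 * real T}) \<le> real n" using card_mono[OF _ sub] by simp
  also have "\<dots> \<le> log 2 (4 * real T) + 1"
    using two_le_log2_four_mult[OF assms] ceiling_correct[of "log 2 (4 * real T)"] by (simp add: n_def)
  also have "\<dots> \<le> 2 * log 2 (4 * real T)" using two_le_log2_four_mult[OF assms] by simp
  finally show "real (card {k::nat. 4 ^ k < 4 * real T}) \<le> 2 * log 2 (4 * real T)" .
qed

section \<open>Ville's inequality for bounded martingale differences\<close>

text \<open>F r stands for the information available before the r-th increment Z r is revealed; the
  martingale difference property is stated as orthogonality to bounded F r-measurable weights.\<close>
locale bounded_martingale_differences = prob_space M
  for M :: "'w measure" and F :: "nat \<Rightarrow> 'w measure" and Z :: "nat \<Rightarrow> 'w \<Rightarrow> real"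
    and c :: real and T :: nat +
  assumes subalgebra_F: "\<And>r. subalgebra M (F r)"
    and Z_measurable_F: "\<And>r s. 1 \<le> r \<Longrightarrow> r < s \<Longrightarrow> Z r \<in> borel_measurable (F s)"
    and abs_Z_le: "\<And>r \<omega>. \<bar>Z r \<omega>\<bar> \<le> c"
    and integral_mult_Z: "\<And>r H B. r \<in> {1..T} \<Longrightarrow> H \<in> borel_measurable (F r) \<Longrightarrow>
      (\<And>\<omega>. \<bar>H \<omega>\<bar> \<le> B) \<Longrightarrow> (\<integral>\<omega>. H \<omega> * Z r \<omega> \<partial>M) = 0"
begin

lemma uminus: "bounded_martingale_differences M F (\<lambda>r \<omega>. - Z r \<omega>) c T"
proof unfold_locales
  show "(\<lambda>\<omega>. - Z r \<omega>) \<in> borel_measurable (F s)" if "1 \<le> r" "r < s" for r s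
    using Z_measurable_F[OF that] by measurable
  show "(\<integral>\<omega>. H \<omega> * - Z r \<omega> \<partial>M) = 0"
    if "r \<in> {1..T}" "H \<in> borel_measurable (F r)" "\<And>\<omega>. \<bar>H \<omega>\<bar> \<le> B" for r H B
    using integral_mult_Z[OF that] by simp
qed (use subalgebra_F abs_Z_le in auto)

end

text \<open>Frozen from the first time it reaches e^L on, the process exp (theta sum Z - theta^2 sum Z^2)
  is a nonnegative supermartingale started at 1, since each factor is at most 1 + theta Z_r.\<close>
locale stopped_exp_supermartingale = bounded_martingale_differences M F Z c T
  for M :: "'w measure" and F Z c T +
  fixes \<theta> L :: real
  assumes theta_pos: "0 < \<theta>" and theta_c: "\<theta> * c \<le> 1/2"
begin

definition deviation :: "nat \<Rightarrow> 'w \<Rightarrow> real" where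
  "deviation s \<omega> = \<theta> * (\<Sum>r\<in>{1..s}. Z r \<omega>) - \<theta>\<^sup>2 * (\<Sum>r\<in>{1..s}. (Z r \<omega>)\<^sup>2)"

definition crossed :: "nat \<Rightarrow> 'w \<Rightarrow> bool" where
  "crossed s \<omega> \<longleftrightarrow> (\<exists>q\<in>{1..s}. L \<le> deviation q \<omega>)"

definition factor :: "nat \<Rightarrow> 'w \<Rightarrow> real" where
  "factor r \<omega> = exp (\<theta> * Z r \<omega> - (\<theta> * Z r \<omega>)\<^sup>2)"

definition stopped :: "nat \<Rightarrow> 'w \<Rightarrow> real" where
  "stopped s \<omega> = (\<Prod>r\<in>{1..s}. if crossed (r - 1) \<omega> then 1 else factor r \<omega>)"

lemma stopped_Suc: "stopped (Suc s) \<omega> = stopped s \<omega> * (if crossed s \<omega> then 1 else factor (Suc s) \<omega>)"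
  unfolding stopped_def by (simp add: prod.nat_ivl_Suc' mult.commute)

lemma crossed_Suc: "crossed (Suc s) \<omega> \<longleftrightarrow> crossed s \<omega> \<or> L \<le> deviation (Suc s) \<omega>"
  unfolding crossed_def by (auto simp: le_Suc_eq) (use atLeastAtMost_iff in force)

lemma factor_le: "factor r \<omega> \<le> 1 + \<theta> * Z r \<omega>"
proof -
  have "\<bar>\<theta> * Z r \<omega>\<bar> \<le> \<theta> * c"
    using abs_Z_le[of r \<omega>] theta_pos by (simp add: abs_mult mult_left_mono)
  then show ?thesis unfolding factor_def using theta_c by (intro exp_diff_square_le_one_plus) auto
qed

lemma stopped_nonneg: "0 \<le> stopped s \<omega>"
  unfolding stopped_def factor_def by (auto intro!: prod_nonneg)

lemma stopped_le: "stopped s \<omega> \<le> (3/2) ^ s"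
proof (induction s)
  case (Suc s)
  have "\<theta> * Z (Suc s) \<omega> \<le> \<theta> * c"
    using abs_Z_le[of "Suc s" \<omega>] theta_pos by (intro mult_left_mono) auto
  then have "factor (Suc s) \<omega> \<le> 3/2" using factor_le[of "Suc s" \<omega>] theta_c by linarith
  then have "stopped (Suc s) \<omega> \<le> stopped s \<omega> * (3/2)"
    unfolding stopped_Suc using stopped_nonneg by (intro mult_left_mono) auto
  then show ?case using Suc by simp
qed (simp add: stopped_def)

lemma stopped_Suc_le:
  "stopped (Suc s) \<omega> \<le> stopped s \<omega> + \<theta> * ((if crossed s \<omega> then 0 else stopped s \<omega>) * Z (Suc s) \<omega>)"
proof (cases "crossed s \<omega>")
  case False
  have "stopped s \<omega> * factor (Suc s) \<omega> \<le> stopped s \<omega> * (1 + \<theta> * Z (Suc s) \<omega>)"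
    using factor_le stopped_nonneg by (intro mult_left_mono) auto
  then show ?thesis using False by (simp add: stopped_Suc algebra_simps)
qed (simp add: stopped_Suc)

lemma stopped_crossed:
  "(\<not> crossed s \<omega> \<longrightarrow> stopped s \<omega> = exp (deviation s \<omega>)) \<and> (crossed s \<omega> \<longrightarrow> exp L \<le> stopped s \<omega>)"
proof (induction s)
  case 0
  then show ?case by (simp add: stopped_def crossed_def deviation_def)
next
  case (Suc s)
  have "deviation (Suc s) \<omega> = deviation s \<omega> + (\<theta> * Z (Suc s) \<omega> - (\<theta> * Z (Suc s) \<omega>)\<^sup>2)"
    unfolding deviation_def by (simp add: algebra_simps power_mult_distrib)
  then show ?case using Suc by (auto simp: stopped_Suc crossed_Suc factor_def exp_add[symmetric])
qed

lemma measurable_deviation_F: "q < s \<Longrightarrow> deviation q \<in> borel_measurable (F s)"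
  unfolding deviation_def
  by (auto intro!: borel_measurable_sum borel_measurable_diff borel_measurable_times
      borel_measurable_power Z_measurable_F)

lemma measurable_crossed_F: "q < s \<Longrightarrow> Measurable.pred (F s) (crossed q)"
  unfolding crossed_def
  by (intro pred_intros_finite) (auto simp: Measurable.pred_def intro!: borel_measurable_le measurable_deviation_F)

lemma measurable_factor_F: "1 \<le> r \<Longrightarrow> r < s \<Longrightarrow> factor r \<in> borel_measurable (F s)"
  unfolding factor_def using Z_measurable_F by measurable

lemma measurable_stopped_F: "q < s \<Longrightarrow> stopped q \<in> borel_measurable (F s)"
  unfolding stopped_def
  by (intro borel_measurable_prod measurable_If)
    (auto intro!: measurable_crossed_F[unfolded Measurable.pred_def] measurable_factor_F)

lemma integrable_stopped: "integrable M (stopped s)"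
proof (rule integrable_const_bound[where B="(3/2) ^ s"])
  show "stopped s \<in> borel_measurable M"
    using measurable_from_subalg[OF subalgebra_F measurable_stopped_F[of s "Suc s"]] by simp
qed (use stopped_le stopped_nonneg in auto)

lemma integral_stopped_le_1: "s \<le> T \<Longrightarrow> (\<integral>\<omega>. stopped s \<omega> \<partial>M) \<le> 1"
proof (induction s)
  case 0
  then show ?case by (simp add: stopped_def prob_space)
next
  case (Suc s)
  define H where "H \<omega> = (if crossed s \<omega> then 0 else stopped s \<omega>)" for \<omega>
  have H: "H \<in> borel_measurable (F (Suc s))"
    unfolding H_def using measurable_stopped_F[of s "Suc s"] measurable_crossed_F[of s "Suc s"]
    by (intro measurable_If) (auto simp: Measurable.pred_def)
  have "\<bar>H \<omega>\<bar> \<le> (3/2) ^ s" for \<omega> unfolding H_def using stopped_le stopped_nonneg by auto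
  then have HZ: "(\<integral>\<omega>. H \<omega> * Z (Suc s) \<omega> \<partial>M) = 0"
    using Suc.prems by (intro integral_mult_Z[OF _ H]) auto
  have int_HZ: "integrable M (\<lambda>\<omega>. H \<omega> * Z (Suc s) \<omega>)"
  proof (rule integrable_const_bound[where B="(3/2) ^ s * c"])
    show "AE \<omega> in M. norm (H \<omega> * Z (Suc s) \<omega>) \<le> (3/2) ^ s * c"
      using \<open>\<And>\<omega>. \<bar>H \<omega>\<bar> \<le> (3/2) ^ s\<close> abs_Z_le by (auto simp: abs_mult intro!: mult_mono)
    show "(\<lambda>\<omega>. H \<omega> * Z (Suc s) \<omega>) \<in> borel_measurable M"
      using measurable_from_subalg[OF subalgebra_F H]
        measurable_from_subalg[OF subalgebra_F Z_measurable_F[of "Suc s" "Suc (Suc s)"]] by simp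
  qed
  have "(\<integral>\<omega>. stopped (Suc s) \<omega> \<partial>M) \<le> (\<integral>\<omega>. stopped s \<omega> + \<theta> * (H \<omega> * Z (Suc s) \<omega>) \<partial>M)"
    using int_HZ integrable_stopped stopped_Suc_le unfolding H_def by (intro integral_mono) auto
  then show ?case using HZ int_HZ integrable_stopped Suc by simp
qed

lemma prob_crossed_le:
  "measure M {\<omega> \<in> space M. \<exists>s\<in>{1..T}. L \<le> deviation s \<omega>} \<le> exp (- L)"
proof -
  have [measurable]: "stopped T \<in> borel_measurable M"
    using measurable_from_subalg[OF subalgebra_F measurable_stopped_F[of T "Suc T"]] by simp
  have "{\<omega> \<in> space M. \<exists>s\<in>{1..T}. L \<le> deviation s \<omega>} \<subseteq> {\<omega> \<in> space M. exp L \<le> stopped T \<omega>}"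
    using stopped_crossed[of T] by (auto simp: crossed_def)
  then have "measure M {\<omega> \<in> space M. \<exists>s\<in>{1..T}. L \<le> deviation s \<omega>}
      \<le> measure M {\<omega> \<in> space M. exp L \<le> stopped T \<omega>}"
    by (intro finite_measure_mono) measurable
  also have "\<dots> \<le> (\<integral>\<omega>. stopped T \<omega> \<partial>M) / exp L"
    using integrable_stopped stopped_nonneg
    by (intro integral_Markov_inequality_measure[where A="space M"]) auto
  also have "\<dots> \<le> 1 / exp L"
    using integral_stopped_le_1[of T] by (intro divide_right_mono) auto
  also have "\<dots> = exp (- L)" by (simp add: exp_minus inverse_eq_divide)
  finally show ?thesis .
qed

end

context bounded_martingale_differences
begin

lemma measurable_Z: "1 \<le> r \<Longrightarrow> Z r \<in> borel_measurable M"
  using measurable_from_subalg[OF subalgebra_F Z_measurable_F[of r "Suc r"]] by simp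

lemma sets_deviation:
  "{\<omega> \<in> space M. \<exists>s\<in>{1..T}.
      L \<le> \<theta> * (\<Sum>r\<in>{1..s}. Z r \<omega>) - \<theta>\<^sup>2 * (\<Sum>r\<in>{1..s}. (Z r \<omega>)\<^sup>2)} \<in> sets M"
proof -
  have [measurable]: "(\<lambda>\<omega>. \<Sum>r\<in>{1..s}. Z r \<omega>) \<in> borel_measurable M"
    "(\<lambda>\<omega>. \<Sum>r\<in>{1..s}. (Z r \<omega>)\<^sup>2) \<in> borel_measurable M" for s
    by (auto intro!: borel_measurable_sum borel_measurable_power measurable_Z)
  show ?thesis by measurable
qed

lemma prob_deviation_le:
  assumes "0 \<le> \<theta>" "\<theta> * c \<le> 1/2"
  shows "measure M {\<omega> \<in> space M. \<exists>s\<in>{1..T}.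
      L \<le> \<theta> * (\<Sum>r\<in>{1..s}. Z r \<omega>) - \<theta>\<^sup>2 * (\<Sum>r\<in>{1..s}. (Z r \<omega>)\<^sup>2)} \<le> exp (- L)"
proof (cases "\<theta> = 0")
  case True
  have "measure M {\<omega> \<in> space M. \<exists>s\<in>{1..T}. L \<le> 0} \<le> exp (- L)"
  proof (cases "L \<le> 0")
    case True
    then have "1 \<le> exp (- L)" by simp
    with prob_le_1 show ?thesis by (rule order.trans)
  qed simp
  then show ?thesis using True by simp
next
  case False
  interpret stopped_exp_supermartingale M F Z c T \<theta> L
    using assms False by unfold_locales auto
  show ?thesis using prob_crossed_le unfolding deviation_def .
qed

end

section \<open>The natural filtration of AdaSGD\<close>

lemma space_past [simp]: "space (past M g t) = space M"
  unfolding past_def by (rule space_measure_of_conv)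

lemma sets_past:
  fixes g :: "nat \<Rightarrow> 'w \<Rightarrow> 'a::topological_space"
  shows "sets (past M g t) = sigma_sets (space M) (\<Union>s\<in>{1..<t}. {g s -` A \<inter> space M | A. A \<in> sets borel})"
  unfolding past_def by (rule sets_measure_of) auto

lemma subalgebra_past:
  fixes g :: "nat \<Rightarrow> 'w \<Rightarrow> 'a::topological_space"
  assumes "\<And>s. g s \<in> borel_measurable M"
  shows "subalgebra M (past M g t)"
proof -
  have "(\<Union>s\<in>{1..<t}. {g s -` A \<inter> space M | A. A \<in> sets borel}) \<subseteq> sets M"
    using assms by (auto intro!: measurable_sets)
  then show ?thesis
    unfolding subalgebra_def sets_past by (simp add: sets.sigma_sets_subset)
qed

lemma measurable_past:
  fixes g :: "nat \<Rightarrow> 'w \<Rightarrow> 'a::topological_space"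
  assumes "\<And>s. g s \<in> borel_measurable M" and "1 \<le> s" "s < t"
  shows "g s \<in> borel_measurable (past M g t)"
proof (rule measurableI)
  fix A :: "'a set" assume "A \<in> sets borel"
  then have "g s -` A \<inter> space M \<in> (\<Union>s\<in>{1..<t}. {g s -` A \<inter> space M | A. A \<in> sets borel})"
    using assms by (intro UN_I[of s]) auto
  then show "g s -` A \<inter> space (past M g t) \<in> sets (past M g t)"
    unfolding space_past sets_past by (rule sigma_sets.Basic)
qed (use assms in auto)

lemma measurable_adaG_past:
  fixes g :: "nat \<Rightarrow> 'w \<Rightarrow> 'a::euclidean_space"
  assumes "\<And>s. g s \<in> borel_measurable M" and "s < t"
  shows "(\<lambda>\<omega>. adaG \<gamma> g \<omega> s) \<in> borel_measurable (past M g t)"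
proof -
  have "(\<lambda>\<omega>. (norm (g r \<omega>))\<^sup>2) \<in> borel_measurable (past M g t)" if "r \<in> {1..s}" for r
  proof -
    have "g r \<in> borel_measurable (past M g t)" using assms that by (intro measurable_past) auto
    then show ?thesis by measurable
  qed
  then show ?thesis unfolding adaG_def by measurable
qed

lemma measurable_adaW_past:
  fixes g :: "nat \<Rightarrow> 'w \<Rightarrow> 'a::euclidean_space"
  assumes "\<And>s. g s \<in> borel_measurable M" and "s \<le> t"
  shows "(\<lambda>\<omega>. adaW w1 \<eta> \<gamma> g \<omega> s) \<in> borel_measurable (past M g t)"
  using assms(2)
proof (induction s)
  case (Suc s)
  have [measurable]: "(\<lambda>\<omega>. adaW w1 \<eta> \<gamma> g \<omega> s) \<in> borel_measurable (past M g t)"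
    and [measurable]: "(\<lambda>\<omega>. adaG \<gamma> g \<omega> s) \<in> borel_measurable (past M g t)"
    using Suc assms(1) by (auto intro: measurable_adaG_past)
  show ?case
  proof (cases "s = 0")
    case False
    then have [measurable]: "g s \<in> borel_measurable (past M g t)"
      using Suc assms(1) by (intro measurable_past) auto
    show ?thesis using False by simp
  qed simp
qed simp

lemma adaG_ge: "0 < \<gamma> \<Longrightarrow> \<gamma> \<le> adaG \<gamma> g \<omega> s"
  unfolding adaG_def by (rule real_le_rsqrt) (simp add: sum_nonneg)

lemma norm_le_adaG: "1 \<le> s \<Longrightarrow> norm (g s \<omega>) \<le> adaG \<gamma> g \<omega> s"
  unfolding adaG_def
  by (rule real_le_rsqrt) (smt (verit) member_le_sum[of s "{1..s}"] atLeastAtMost_iff finite_atLeastAtMost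
      order_refl zero_le_power2)

lemma norm_adaW_diff_le:
  assumes "0 < \<eta>" "0 < \<gamma>"
  shows "norm (adaW w1 \<eta> \<gamma> g \<omega> s - w1) \<le> real s * \<eta>"
proof (induction s)
  case (Suc s)
  show ?case
  proof (cases "s = 0")
    case False
    have G: "0 < adaG \<gamma> g \<omega> s" using adaG_ge[of \<gamma> g \<omega> s] assms by simp
    have "norm ((\<eta> / adaG \<gamma> g \<omega> s) *\<^sub>R g s \<omega>) = \<eta> * (norm (g s \<omega>) / adaG \<gamma> g \<omega> s)"
      using assms G by simp
    also have "\<dots> \<le> \<eta>"
      using norm_le_adaG[of s g \<omega> \<gamma>] False G assms by (intro mult_left_le) auto
    finally have "norm ((\<eta> / adaG \<gamma> g \<omega> s) *\<^sub>R g s \<omega>) \<le> \<eta>" .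
    then show ?thesis
      using False Suc norm_triangle_ineq4[of "adaW w1 \<eta> \<gamma> g \<omega> s - w1" "(\<eta> / adaG \<gamma> g \<omega> s) *\<^sub>R g s \<omega>"]
      by (simp add: algebra_simps)
  qed (use assms in simp)
qed simp

lemma borel_measurable_smooth:
  fixes gradf :: "'a::euclidean_space \<Rightarrow> 'a"
  assumes "smooth \<beta> gradf"
  shows "gradf \<in> borel_measurable borel"
proof (intro borel_measurable_continuous_onI lipschitz_on_continuous_on)
  have "norm (gradf x - gradf y) \<le> \<bar>\<beta>\<bar> * norm (x - y)" for x y
    using assms unfolding smooth_def by (smt (verit) abs_ge_self mult_right_mono norm_ge_zero)
  then show "\<bar>\<beta>\<bar>-lipschitz_on UNIV gradf" by (intro lipschitz_onI) (auto simp: dist_norm)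
qed

lemma le_affine_of_square_le:
  fixes n a p0 p1 :: real
  assumes "0 \<le> n" "0 \<le> a" "0 \<le> p0" "0 \<le> p1" "n\<^sup>2 \<le> p0\<^sup>2 + p1\<^sup>2 * a\<^sup>2"
  shows "n \<le> p0 + p1 * a"
proof (rule power2_le_imp_le)
  have "p0\<^sup>2 + p1\<^sup>2 * a\<^sup>2 \<le> (p0 + p1 * a)\<^sup>2"
    using assms by (simp add: power2_sum power_mult_distrib)
  then show "n\<^sup>2 \<le> (p0 + p1 * a)\<^sup>2" using assms(5) by linarith
qed (use assms in simp)

lemma decorrelated_step_noise_le:
  fixes \<eta> \<gamma> G a n \<sigma>0 \<sigma>1 :: real
  assumes "0 < \<eta>" "0 < \<gamma>" "\<gamma> \<le> G" "0 \<le> a" "0 \<le> n" "0 \<le> \<sigma>0" "0 \<le> \<sigma>1"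
    and "n\<^sup>2 \<le> \<sigma>0\<^sup>2 + \<sigma>1\<^sup>2 * a\<^sup>2"
  shows "\<eta> / sqrt (G\<^sup>2 + a\<^sup>2) * n \<le> \<eta> * (\<sigma>0 / \<gamma> + \<sigma>1)"
proof -
  define q where "q = sqrt (G\<^sup>2 + a\<^sup>2)"
  have qG: "G \<le> q" and qa: "a \<le> q" using assms by (auto simp: q_def intro: real_le_rsqrt)
  have q: "0 < q" using qG assms by linarith
  have "n / q \<le> (\<sigma>0 + \<sigma>1 * a) / q"
    using le_affine_of_square_le[of n a \<sigma>0 \<sigma>1] assms q by (intro divide_right_mono) auto
  also have "\<dots> = \<sigma>0 / q + \<sigma>1 * (a / q)" by (simp add: add_divide_distrib)
  also have "\<dots> \<le> \<sigma>0 / \<gamma> + \<sigma>1"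
    using assms qG qa q by (intro add_mono mult_left_le divide_left_mono) auto
  finally have "\<eta> * (n / q) \<le> \<eta> * (\<sigma>0 / \<gamma> + \<sigma>1)" using assms by (intro mult_left_mono) auto
  then show ?thesis by (simp add: q_def)
qed

section \<open>The normalised noise increments\<close>

locale adasgd = prob_space M
  for M :: "'w measure" and gradf :: "'a::euclidean_space \<Rightarrow> 'a" and g :: "nat \<Rightarrow> 'w \<Rightarrow> 'a"
    and w1 wstar :: 'a and \<beta> \<eta> \<gamma> \<sigma>0 \<sigma>1 \<delta> :: real and T :: nat +
  assumes smooth: "smooth \<beta> gradf"
    and eta_pos: "0 < \<eta>" and gamma_pos: "0 < \<gamma>"
    and sigma0_nonneg: "0 \<le> \<sigma>0" and sigma1_nonneg: "0 \<le> \<sigma>1"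
    and delta_pos: "0 < \<delta>" and delta_less_1: "\<delta> < 1"
    and measurable_g: "\<And>s. g s \<in> borel_measurable M"
    and unbiased: "\<And>t v. t \<in> {1..T} \<Longrightarrow>
      AE \<omega> in M. real_cond_exp M (past M g t) (\<lambda>\<omega>. g t \<omega> \<bullet> v) \<omega> = gradf (adaW w1 \<eta> \<gamma> g \<omega> t) \<bullet> v"
    and noise: "\<And>t. t \<in> {1..T} \<Longrightarrow>
      AE \<omega> in M. (norm (g t \<omega> - gradf (adaW w1 \<eta> \<gamma> g \<omega> t)))\<^sup>2
        \<le> \<sigma>0\<^sup>2 + \<sigma>1\<^sup>2 * (norm (gradf (adaW w1 \<eta> \<gamma> g \<omega> t)))\<^sup>2"
begin

abbreviation w :: "nat \<Rightarrow> 'w \<Rightarrow> 'a" where "w s \<omega> \<equiv> adaW w1 \<eta> \<gamma> g \<omega> s"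
abbreviation G :: "nat \<Rightarrow> 'w \<Rightarrow> real" where "G s \<omega> \<equiv> adaG \<gamma> g \<omega> s"
abbreviation eta_hat :: "nat \<Rightarrow> 'w \<Rightarrow> real" where "eta_hat s \<omega> \<equiv> hat_eta \<eta> \<gamma> gradf w1 g \<omega> s"

definition radius :: "nat \<Rightarrow> 'w \<Rightarrow> real" where
  "radius s \<omega> = max (Max ((\<lambda>q. norm (w q \<omega> - wstar)) ` {1..s})) \<eta>"

definition noise_vec :: "nat \<Rightarrow> 'w \<Rightarrow> 'a" where
  "noise_vec s \<omega> = gradf (w s \<omega>) - g s \<omega>"

definition noise_bounded :: "nat \<Rightarrow> 'w \<Rightarrow> bool" where
  "noise_bounded s \<omega> \<longleftrightarrow> (norm (noise_vec s \<omega>))\<^sup>2 \<le> \<sigma>0\<^sup>2 + \<sigma>1\<^sup>2 * (norm (gradf (w s \<omega>)))\<^sup>2"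

definition increment :: "nat \<Rightarrow> 'w \<Rightarrow> real" where
  "increment s \<omega> = eta_hat s \<omega> * (noise_vec s \<omega> \<bullet> (w s \<omega> - wstar)) / radius s \<omega>"

definition noise_scale :: real where
  "noise_scale = \<eta> * (\<sigma>0 / \<gamma> + \<sigma>1)"

text \<open>The increments are bounded by the noise scale only where the noise bound holds, i.e. almost
  surely; clipping makes them bounded everywhere without changing them almost surely.\<close>
definition clipped :: "nat \<Rightarrow> 'w \<Rightarrow> real" where
  "clipped s \<omega> = max (- noise_scale) (min noise_scale (increment s \<omega>))"

definition weighted_noise :: "nat \<Rightarrow> 'w \<Rightarrow> real" where
  "weighted_noise t \<omega> = (\<Sum>s\<in>{1..t}. (\<eta> / G (s - 1) \<omega>)\<^sup>2 * (norm (noise_vec s \<omega>))\<^sup>2)"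

lemma subalgebra_past_g: "subalgebra M (past M g r)"
  using measurable_g by (rule subalgebra_past)

lemma measurable_from_past: "f \<in> borel_measurable (past M g r) \<Longrightarrow> f \<in> borel_measurable M"
  using subalgebra_past_g by (rule measurable_from_subalg)

lemma measurable_w_past: "s \<le> r \<Longrightarrow> w s \<in> borel_measurable (past M g r)"
  using measurable_g by (rule measurable_adaW_past)

lemma measurable_gradf_w_past: "s \<le> r \<Longrightarrow> (\<lambda>\<omega>. gradf (w s \<omega>)) \<in> borel_measurable (past M g r)"
  using measurable_compose[OF measurable_w_past borel_measurable_smooth[OF smooth]] by (simp add: comp_def)

lemma measurable_eta_hat_past:
  assumes "s \<le> r" "0 < r"
  shows "eta_hat s \<in> borel_measurable (past M g r)"
proof -
  have [measurable]: "(\<lambda>\<omega>. G (s - 1) \<omega>) \<in> borel_measurable (past M g r)"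
    using assms measurable_g by (intro measurable_adaG_past) auto
  have [measurable]: "(\<lambda>\<omega>. gradf (w s \<omega>)) \<in> borel_measurable (past M g r)"
    using assms by (intro measurable_gradf_w_past) auto
  show ?thesis unfolding hat_eta_def by measurable
qed

lemma measurable_radius_past:
  assumes "s \<le> r"
  shows "radius s \<in> borel_measurable (past M g r)"
proof -
  have "(\<lambda>\<omega>. norm (w q \<omega> - wstar)) \<in> borel_measurable (past M g r)" if "q \<in> {1..s}" for q
  proof -
    have [measurable]: "w q \<in> borel_measurable (past M g r)"
      using that assms by (intro measurable_w_past) auto
    show ?thesis by measurable
  qed
  then have "(\<lambda>\<omega>. Max ((\<lambda>q. norm (w q \<omega> - wstar)) ` {1..s})) \<in> borel_measurable (past M g r)"
    by (intro borel_measurable_Max) auto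
  then show ?thesis unfolding radius_def by measurable
qed

lemma measurable_noise_vec_past:
  "1 \<le> s \<Longrightarrow> s < r \<Longrightarrow> noise_vec s \<in> borel_measurable (past M g r)"
  unfolding noise_vec_def
  by (intro borel_measurable_diff measurable_gradf_w_past measurable_past measurable_g) auto

lemma measurable_increment_past:
  assumes "1 \<le> s" "s < r"
  shows "increment s \<in> borel_measurable (past M g r)"
proof -
  have [measurable]: "noise_vec s \<in> borel_measurable (past M g r)" "eta_hat s \<in> borel_measurable (past M g r)"
    "radius s \<in> borel_measurable (past M g r)" "w s \<in> borel_measurable (past M g r)"
    using assms by (auto intro: measurable_noise_vec_past measurable_eta_hat_past measurable_radius_past
        measurable_w_past)
  show ?thesis unfolding increment_def by measurable
qed

lemma measurable_clipped_past: "1 \<le> s \<Longrightarrow> s < r \<Longrightarrow> clipped s \<in> borel_measurable (past M g r)"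
  unfolding clipped_def by (intro borel_measurable_max borel_measurable_min measurable_increment_past) auto

lemma eta_le_radius: "\<eta> \<le> radius s \<omega>"
  unfolding radius_def by simp

lemma radius_pos: "0 < radius s \<omega>"
  using eta_le_radius eta_pos by (rule order.strict_trans2[rotated])

lemma norm_w_le_radius: "1 \<le> s \<Longrightarrow> norm (w s \<omega> - wstar) \<le> radius s \<omega>"
  unfolding radius_def by (rule max.coboundedI1, rule Max_ge) auto

lemma radius_Suc: "1 \<le> s \<Longrightarrow> radius s \<omega> \<le> radius (Suc s) \<omega>"
  unfolding radius_def by (intro max.mono Max_mono image_mono) auto

lemma eta_hat_nonneg: "0 \<le> eta_hat s \<omega>"
  using eta_pos by (simp add: hat_eta_def)

lemma eta_hat_le: "eta_hat s \<omega> \<le> \<eta> / G (s - 1) \<omega>"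
proof -
  have "0 < G (s - 1) \<omega>" using adaG_ge[OF gamma_pos] gamma_pos by (rule order.strict_trans2[rotated])
  then show ?thesis unfolding hat_eta_def using eta_pos
    by (intro divide_left_mono real_le_rsqrt mult_pos_pos) (auto intro: add_pos_nonneg)
qed

lemma eta_hat_le_eta_gamma: "eta_hat s \<omega> \<le> \<eta> / \<gamma>"
proof -
  have "\<gamma> \<le> G (s - 1) \<omega>" by (rule adaG_ge[OF gamma_pos])
  then have "\<eta> / G (s - 1) \<omega> \<le> \<eta> / \<gamma>"
    using gamma_pos eta_pos by (intro divide_left_mono mult_pos_pos) auto
  then show ?thesis using eta_hat_le by (rule order.trans[rotated])
qed

lemma abs_increment_le: "1 \<le> s \<Longrightarrow> \<bar>increment s \<omega>\<bar> \<le> eta_hat s \<omega> * norm (noise_vec s \<omega>)"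
proof -
  assume s: "1 \<le> s"
  have "\<bar>noise_vec s \<omega> \<bullet> (w s \<omega> - wstar)\<bar> \<le> norm (noise_vec s \<omega>) * norm (w s \<omega> - wstar)"
    by (rule Cauchy_Schwarz_ineq2)
  also have "\<dots> \<le> norm (noise_vec s \<omega>) * radius s \<omega>"
    using norm_w_le_radius[OF s] by (intro mult_left_mono) auto
  finally have "\<bar>noise_vec s \<omega> \<bullet> (w s \<omega> - wstar)\<bar> / radius s \<omega> \<le> norm (noise_vec s \<omega>)"
    using radius_pos by (simp add: divide_le_eq)
  then have "eta_hat s \<omega> * (\<bar>noise_vec s \<omega> \<bullet> (w s \<omega> - wstar)\<bar> / radius s \<omega>)
      \<le> eta_hat s \<omega> * norm (noise_vec s \<omega>)"
    by (intro mult_left_mono eta_hat_nonneg)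
  then show ?thesis unfolding increment_def using eta_hat_nonneg
    by (simp add: abs_mult abs_of_pos[OF radius_pos])
qed

lemma noise_scale_nonneg: "0 \<le> noise_scale"
  unfolding noise_scale_def using eta_pos gamma_pos sigma0_nonneg sigma1_nonneg by simp

lemma abs_increment_le_noise_scale:
  assumes "1 \<le> s" "noise_bounded s \<omega>"
  shows "\<bar>increment s \<omega>\<bar> \<le> noise_scale"
proof -
  have "eta_hat s \<omega> * norm (noise_vec s \<omega>) \<le> noise_scale"
    using assms(2) unfolding hat_eta_def noise_scale_def noise_bounded_def
    by (intro decorrelated_step_noise_le adaG_ge eta_pos gamma_pos sigma0_nonneg sigma1_nonneg) auto
  then show ?thesis using abs_increment_le[OF assms(1)] by (rule order.trans[rotated])
qed

lemma clipped_eq_increment: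
  assumes "1 \<le> s" "noise_bounded s \<omega>"
  shows "clipped s \<omega> = increment s \<omega>"
  using abs_increment_le_noise_scale[OF assms] unfolding clipped_def by (auto simp: abs_le_iff)

lemma abs_clipped_le: "\<bar>clipped s \<omega>\<bar> \<le> noise_scale"
  unfolding clipped_def using noise_scale_nonneg by auto

lemma increment_square_le:
  assumes "1 \<le> s"
  shows "(increment s \<omega>)\<^sup>2 \<le> (\<eta> / G (s - 1) \<omega>)\<^sup>2 * (norm (noise_vec s \<omega>))\<^sup>2"
proof -
  have "\<bar>increment s \<omega>\<bar> \<le> eta_hat s \<omega> * norm (noise_vec s \<omega>)"
    using assms by (rule abs_increment_le)
  also have "\<dots> \<le> \<eta> / G (s - 1) \<omega> * norm (noise_vec s \<omega>)"
    using eta_hat_le by (rule mult_right_mono) simp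
  finally have "\<bar>increment s \<omega>\<bar>\<^sup>2 \<le> (\<eta> / G (s - 1) \<omega> * norm (noise_vec s \<omega>))\<^sup>2"
    by (intro power_mono) auto
  then show ?thesis by (simp only: power_mult_distrib power2_abs)
qed

lemma AE_noise_bounded: "AE \<omega> in M. \<forall>s\<in>{1..T}. noise_bounded s \<omega>"
proof (rule AE_finite_allI)
  fix s assume "s \<in> {1..T}"
  from noise[OF this] show "AE \<omega> in M. noise_bounded s \<omega>"
    by eventually_elim (simp add: noise_bounded_def noise_vec_def norm_minus_commute)
qed simp

text \<open>Smoothness enters only here and through measurability: it keeps the gradients along the
  trajectory bounded, which makes the products in the martingale argument integrable.\<close>
lemma norm_gradf_w_le: "norm (gradf (w s \<omega>)) \<le> norm (gradf w1) + \<bar>\<beta>\<bar> * (real s * \<eta>)"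
proof -
  have "norm (gradf (w s \<omega>) - gradf w1) \<le> \<beta> * norm (w s \<omega> - w1)"
    using smooth unfolding smooth_def by blast
  also have "\<dots> \<le> \<bar>\<beta>\<bar> * norm (w s \<omega> - w1)" by (intro mult_right_mono) auto
  also have "\<dots> \<le> \<bar>\<beta>\<bar> * (real s * \<eta>)"
    by (intro mult_left_mono norm_adaW_diff_le eta_pos gamma_pos) auto
  finally show ?thesis using norm_triangle_ineq2[of "gradf (w s \<omega>)" "gradf w1"] by linarith
qed

lemma AE_norm_g_le:
  assumes "r \<in> {1..T}"
  shows "\<exists>K. AE \<omega> in M. norm (g r \<omega>) \<le> K"
proof -
  define K where "K = norm (gradf w1) + \<bar>\<beta>\<bar> * (real r * \<eta>)"
  have "AE \<omega> in M. norm (g r \<omega>) \<le> K + (\<sigma>0 + \<sigma>1 * K)"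
    using AE_noise_bounded
  proof eventually_elim
    case (elim \<omega>)
    have grad: "norm (gradf (w r \<omega>)) \<le> K" unfolding K_def by (rule norm_gradf_w_le)
    have "norm (noise_vec r \<omega>) \<le> \<sigma>0 + \<sigma>1 * norm (gradf (w r \<omega>))"
      using elim assms
      by (intro le_affine_of_square_le[OF norm_ge_zero norm_ge_zero sigma0_nonneg sigma1_nonneg])
        (auto simp: noise_bounded_def)
    also have "\<dots> \<le> \<sigma>0 + \<sigma>1 * K" using grad sigma1_nonneg by (simp add: mult_left_mono)
    finally have "norm (noise_vec r \<omega>) \<le> \<sigma>0 + \<sigma>1 * K" .
    moreover have "norm (g r \<omega>) \<le> norm (gradf (w r \<omega>)) + norm (noise_vec r \<omega>)"
      using norm_triangle_ineq4[of "gradf (w r \<omega>)" "noise_vec r \<omega>"] by (simp add: noise_vec_def)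
    ultimately show ?case using grad by linarith
  qed
  then show ?thesis by blast
qed

lemma integrable_bounded_mult_inner:
  assumes r: "r \<in> {1..T}" and P: "P \<in> borel_measurable M" "\<And>\<omega>. \<bar>P \<omega>\<bar> \<le> B"
  shows "integrable M (\<lambda>\<omega>. P \<omega> * (g r \<omega> \<bullet> v))"
    and "integrable M (\<lambda>\<omega>. P \<omega> * (gradf (w r \<omega>) \<bullet> v))"
proof -
  have bound: "norm (P \<omega> * (x \<bullet> v)) \<le> B * (K * norm v)" if "norm x \<le> K" for \<omega> x K
  proof -
    have "\<bar>x \<bullet> v\<bar> \<le> norm x * norm v" by (rule Cauchy_Schwarz_ineq2)
    also have "\<dots> \<le> K * norm v" using that by (rule mult_right_mono) simp
    finally show ?thesis using P(2)[of \<omega>] by (simp add: abs_mult mult_mono)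
  qed
  have [measurable]: "g r \<in> borel_measurable M" "P \<in> borel_measurable M"
    "(\<lambda>\<omega>. gradf (w r \<omega>)) \<in> borel_measurable M"
    using measurable_g P(1) measurable_from_past[OF measurable_gradf_w_past] by auto
  obtain K where "AE \<omega> in M. norm (g r \<omega>) \<le> K" using AE_norm_g_le[OF r] by blast
  then have "AE \<omega> in M. norm (P \<omega> * (g r \<omega> \<bullet> v)) \<le> B * (K * norm v)"
    by eventually_elim (rule bound)
  then show "integrable M (\<lambda>\<omega>. P \<omega> * (g r \<omega> \<bullet> v))"
    by (intro integrable_const_bound) measurable
  have "AE \<omega> in M. norm (P \<omega> * (gradf (w r \<omega>) \<bullet> v))
      \<le> B * ((norm (gradf w1) + \<bar>\<beta>\<bar> * (real r * \<eta>)) * norm v)"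
    using norm_gradf_w_le by (intro AE_I2 bound)
  then show "integrable M (\<lambda>\<omega>. P \<omega> * (gradf (w r \<omega>) \<bullet> v))"
    by (intro integrable_const_bound) measurable
qed

lemma integral_mult_inner_g:
  assumes r: "r \<in> {1..T}" and P: "P \<in> borel_measurable (past M g r)" "\<And>\<omega>. \<bar>P \<omega>\<bar> \<le> B"
  shows "(\<integral>\<omega>. P \<omega> * (g r \<omega> \<bullet> v) \<partial>M) = (\<integral>\<omega>. P \<omega> * (gradf (w r \<omega>) \<bullet> v) \<partial>M)"
proof -
  interpret finite_measure_subalgebra M "past M g r"
    by unfold_locales (rule subalgebra_past_g)
  have [measurable]: "P \<in> borel_measurable M" "(\<lambda>\<omega>. g r \<omega> \<bullet> v) \<in> borel_measurable M"
    "(\<lambda>\<omega>. gradf (w r \<omega>)) \<in> borel_measurable M"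
    using measurable_from_past[OF P(1)] measurable_g measurable_from_past[OF measurable_gradf_w_past]
    by auto
  have "(\<integral>\<omega>. P \<omega> * (g r \<omega> \<bullet> v) \<partial>M)
      = (\<integral>\<omega>. P \<omega> * real_cond_exp M (past M g r) (\<lambda>\<omega>. g r \<omega> \<bullet> v) \<omega> \<partial>M)"
    using integrable_bounded_mult_inner(1)[OF r _ P(2)] P(1)
    by (intro real_cond_exp_intg(2)[symmetric]) auto
  also have "\<dots> = (\<integral>\<omega>. P \<omega> * (gradf (w r \<omega>) \<bullet> v) \<partial>M)"
    using unbiased[OF r, of v] borel_measurable_cond_exp2[of M "past M g r" "\<lambda>\<omega>. g r \<omega> \<bullet> v"]
    by (intro integral_cong_AE) (auto elim!: eventually_mono)
  finally show ?thesis .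
qed

lemma integral_mult_inner_noise_vec:
  assumes r: "r \<in> {1..T}" and P: "P \<in> borel_measurable (past M g r)" "\<And>\<omega>. \<bar>P \<omega>\<bar> \<le> B"
  shows "integrable M (\<lambda>\<omega>. P \<omega> * (noise_vec r \<omega> \<bullet> v))"
    and "(\<integral>\<omega>. P \<omega> * (noise_vec r \<omega> \<bullet> v) \<partial>M) = 0"
proof -
  note integrable = integrable_bounded_mult_inner[OF r measurable_from_past[OF P(1)] P(2), of v]
  have eq: "(\<lambda>\<omega>. P \<omega> * (noise_vec r \<omega> \<bullet> v)) = (\<lambda>\<omega>. P \<omega> * (gradf (w r \<omega>) \<bullet> v) - P \<omega> * (g r \<omega> \<bullet> v))"
    by (simp add: noise_vec_def inner_diff_left right_diff_distrib)
  show "integrable M (\<lambda>\<omega>. P \<omega> * (noise_vec r \<omega> \<bullet> v))" unfolding eq using integrable by simp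
  show "(\<integral>\<omega>. P \<omega> * (noise_vec r \<omega> \<bullet> v) \<partial>M) = 0"
    unfolding eq using integrable integral_mult_inner_g[OF r P] by simp
qed

lemma integral_mult_increment:
  assumes r: "r \<in> {1..T}" and H: "H \<in> borel_measurable (past M g r)" "\<And>\<omega>. \<bar>H \<omega>\<bar> \<le> B"
  shows "(\<integral>\<omega>. H \<omega> * increment r \<omega> \<partial>M) = 0"
proof -
  define P where "P i \<omega> = H \<omega> * eta_hat r \<omega> / radius r \<omega> * ((w r \<omega> - wstar) \<bullet> i)" for i \<omega>
  have P_past: "P i \<in> borel_measurable (past M g r)" for i
  proof -
    have [measurable]: "H \<in> borel_measurable (past M g r)" "eta_hat r \<in> borel_measurable (past M g r)"
      "radius r \<in> borel_measurable (past M g r)" "w r \<in> borel_measurable (past M g r)"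
      using r H by (auto intro: measurable_eta_hat_past measurable_radius_past measurable_w_past)
    show ?thesis unfolding P_def by measurable
  qed
  have P_bound: "\<bar>P i \<omega>\<bar> \<le> B * (\<eta> / \<gamma>)" if "i \<in> Basis" for i \<omega>
  proof -
    have "\<bar>(w r \<omega> - wstar) \<bullet> i\<bar> \<le> norm (w r \<omega> - wstar)" using that by (rule Basis_le_norm)
    also have "\<dots> \<le> radius r \<omega>" using r by (intro norm_w_le_radius) simp
    finally have "\<bar>(w r \<omega> - wstar) \<bullet> i\<bar> / radius r \<omega> \<le> 1" using radius_pos by simp
    then have "\<bar>H \<omega>\<bar> * eta_hat r \<omega> * (\<bar>(w r \<omega> - wstar) \<bullet> i\<bar> / radius r \<omega>) \<le> B * (\<eta> / \<gamma>) * 1"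
      using H(2) eta_hat_le_eta_gamma eta_hat_nonneg abs_ge_zero[THEN order.trans, OF H(2)] eta_pos gamma_pos
        radius_pos by (intro mult_mono) auto
    then show ?thesis unfolding P_def using eta_hat_nonneg by (simp add: abs_mult abs_of_pos[OF radius_pos])
  qed
  have "H \<omega> * increment r \<omega> = (\<Sum>i\<in>Basis. P i \<omega> * (noise_vec r \<omega> \<bullet> i))" for \<omega>
    using euclidean_inner[of "noise_vec r \<omega>" "w r \<omega> - wstar"]
    unfolding increment_def P_def by (simp add: sum_distrib_left sum_divide_distrib mult_ac)
  then have "(\<integral>\<omega>. H \<omega> * increment r \<omega> \<partial>M) = (\<Sum>i\<in>Basis. (\<integral>\<omega>. P i \<omega> * (noise_vec r \<omega> \<bullet> i) \<partial>M))"
    using integral_mult_inner_noise_vec(1)[OF r P_past P_bound] by (simp add: Bochner_Integration.integral_sum)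
  also have "\<dots> = 0" using integral_mult_inner_noise_vec(2)[OF r P_past P_bound] by simp
  finally show ?thesis .
qed

lemma bounded_martingale_differences_clipped:
  "bounded_martingale_differences M (past M g) clipped noise_scale T"
proof unfold_locales
  fix r :: nat and H :: "'w \<Rightarrow> real" and B :: real
  assume r: "r \<in> {1..T}" and H: "H \<in> borel_measurable (past M g r)" "\<And>\<omega>. \<bar>H \<omega>\<bar> \<le> B"
  have "AE \<omega> in M. H \<omega> * clipped r \<omega> = H \<omega> * increment r \<omega>"
    using AE_noise_bounded by eventually_elim (use r clipped_eq_increment in auto)
  moreover have [measurable]: "H \<in> borel_measurable M" "clipped r \<in> borel_measurable M"
    "increment r \<in> borel_measurable M"
    using r measurable_from_past[OF H(1)] measurable_from_past[OF measurable_clipped_past[of r "Suc r"]]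
      measurable_from_past[OF measurable_increment_past[of r "Suc r"]] by auto
  ultimately have "(\<integral>\<omega>. H \<omega> * clipped r \<omega> \<partial>M) = (\<integral>\<omega>. H \<omega> * increment r \<omega> \<partial>M)"
    by (intro integral_cong_AE) auto
  then show "(\<integral>\<omega>. H \<omega> * clipped r \<omega> \<partial>M) = 0" using integral_mult_increment[OF r H] by simp
qed (simp_all add: subalgebra_past_g measurable_clipped_past abs_clipped_le)

subsection \<open>Peeling over a geometric grid of scales\<close>

definition confidence :: real where
  "confidence = ln (60 * log 2 (4 * real T) / \<delta>)"

text \<open>If noise_scale = 0, the scale 1 / (2 * noise_scale * 2 ^ k) is 0 by the convention x / 0 = 0,
  and the event is empty because confidence is positive.\<close>
definition deviation_event :: "(nat \<Rightarrow> 'w \<Rightarrow> real) \<Rightarrow> nat \<Rightarrow> 'w set" where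
  "deviation_event Z k = {\<omega> \<in> space M. \<exists>s\<in>{1..T}.
     confidence \<le> 1 / (2 * noise_scale * 2 ^ k) * (\<Sum>r\<in>{1..s}. Z r \<omega>)
                   - (1 / (2 * noise_scale * 2 ^ k))\<^sup>2 * (\<Sum>r\<in>{1..s}. (Z r \<omega>)\<^sup>2)}"

definition bad_event :: "'w set" where
  "bad_event = (\<Union>k\<in>{k. 4 ^ k < 4 * real T}.
     deviation_event clipped k \<union> deviation_event (\<lambda>r \<omega>. - clipped r \<omega>) k)"

definition deviation_radius :: "nat \<Rightarrow> 'w \<Rightarrow> real" where
  "deviation_radius t \<omega> = sqrt (A_fn t (\<delta> / log 2 (4 * real T)) * weighted_noise t \<omega>
     + noise_scale\<^sup>2 * B_fn t (\<delta> / log 2 (4 * real T)))"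

lemma sets_deviation_event:
  assumes "bounded_martingale_differences M (past M g) Z noise_scale T"
  shows "deviation_event Z k \<in> sets M"
  using bounded_martingale_differences.sets_deviation[OF assms] unfolding deviation_event_def .

lemma prob_deviation_event_le:
  assumes "bounded_martingale_differences M (past M g) Z noise_scale T"
  shows "measure M (deviation_event Z k) \<le> exp (- confidence)"
proof -
  have "1 / (2 * noise_scale * 2 ^ k) * noise_scale \<le> 1/2"
    using noise_scale_nonneg by (cases "noise_scale = 0") (auto simp: field_simps)
  then show ?thesis unfolding deviation_event_def using noise_scale_nonneg
    by (intro bounded_martingale_differences.prob_deviation_le[OF assms]) auto
qed

lemma sets_bad_event: "1 \<le> T \<Longrightarrow> bad_event \<in> sets M"
  unfolding bad_event_def
  using card_geometric_grid(1) sets_deviation_event[OF bounded_martingale_differences_clipped]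
    sets_deviation_event[OF bounded_martingale_differences.uminus[OF bounded_martingale_differences_clipped]]
  by auto

lemma prob_bad_event_le:
  assumes "1 \<le> T"
  shows "measure M bad_event \<le> \<delta>"
proof -
  note clipped = bounded_martingale_differences_clipped
  note neg = bounded_martingale_differences.uminus[OF clipped]
  note grid = card_geometric_grid[OF assms]
  have "measure M bad_event
      \<le> (\<Sum>k\<in>{k. 4 ^ k < 4 * real T}. measure M (deviation_event clipped k \<union> deviation_event (\<lambda>r \<omega>. - clipped r \<omega>) k))"
    unfolding bad_event_def using grid(1) sets_deviation_event[OF clipped] sets_deviation_event[OF neg]
    by (intro finite_measure_subadditive_finite) auto
  also have "\<dots> \<le> (\<Sum>k\<in>{k. 4 ^ k < 4 * real T}. 2 * exp (- confidence))"
  proof (rule sum_mono)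
    fix k
    show "measure M (deviation_event clipped k \<union> deviation_event (\<lambda>r \<omega>. - clipped r \<omega>) k) \<le> 2 * exp (- confidence)"
      using measure_Un_le[OF sets_deviation_event[OF clipped, of k] sets_deviation_event[OF neg, of k]]
        prob_deviation_event_le[OF clipped, of k] prob_deviation_event_le[OF neg, of k] by linarith
  qed
  also have "\<dots> \<le> 2 * log 2 (4 * real T) * (2 * exp (- confidence))"
    using grid(2) by (simp add: mult_right_mono)
  also have "\<dots> = \<delta> / 15"
    using two_le_log2_four_mult[OF assms] delta_pos by (simp add: confidence_def exp_minus field_simps)
  also have "\<dots> \<le> \<delta>" using delta_pos by simp
  finally show ?thesis .
qed

lemma sum_square_increment_le:
  assumes "\<forall>r\<in>{1..T}. noise_bounded r \<omega>" "t \<in> {1..T}" "s \<in> {1..t}"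
  shows "(\<Sum>r\<in>{1..s}. (increment r \<omega>)\<^sup>2) \<le> min (weighted_noise t \<omega>) (real T * noise_scale\<^sup>2)"
proof -
  have "(\<Sum>r\<in>{1..s}. (increment r \<omega>)\<^sup>2) \<le> (\<Sum>r\<in>{1..s}. (\<eta> / G (r - 1) \<omega>)\<^sup>2 * (norm (noise_vec r \<omega>))\<^sup>2)"
    by (intro sum_mono increment_square_le) auto
  also have "\<dots> \<le> weighted_noise t \<omega>" unfolding weighted_noise_def using assms by (intro sum_mono2) auto
  finally have "(\<Sum>r\<in>{1..s}. (increment r \<omega>)\<^sup>2) \<le> weighted_noise t \<omega>" .
  moreover have "(\<Sum>r\<in>{1..s}. (increment r \<omega>)\<^sup>2) \<le> (\<Sum>r\<in>{1..s}. noise_scale\<^sup>2)"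
  proof (rule sum_mono)
    fix r assume "r \<in> {1..s}"
    then have "\<bar>increment r \<omega>\<bar> \<le> \<bar>noise_scale\<bar>"
      using assms abs_increment_le_noise_scale noise_scale_nonneg by auto
    then show "(increment r \<omega>)\<^sup>2 \<le> noise_scale\<^sup>2" by (simp add: abs_le_square_iff)
  qed
  moreover have "(\<Sum>r\<in>{1..s}. noise_scale\<^sup>2) \<le> real T * noise_scale\<^sup>2"
    using assms by (simp add: mult_right_mono)
  ultimately show ?thesis by simp
qed

lemma grid_deviation_lt_confidence:
  assumes "\<omega> \<in> space M" "\<omega> \<notin> bad_event" "\<forall>r\<in>{1..T}. noise_bounded r \<omega>" "s \<in> {1..T}"
    and "4 ^ k < 4 * real T"
  defines "\<theta> \<equiv> 1 / (2 * noise_scale * 2 ^ k)"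
  shows "\<theta> * (\<Sum>r\<in>{1..s}. increment r \<omega>) - \<theta>\<^sup>2 * (\<Sum>r\<in>{1..s}. (increment r \<omega>)\<^sup>2) < confidence"
    and "\<theta> * - (\<Sum>r\<in>{1..s}. increment r \<omega>) - \<theta>\<^sup>2 * (\<Sum>r\<in>{1..s}. (increment r \<omega>)\<^sup>2) < confidence"
proof -
  have "\<omega> \<notin> deviation_event clipped k" "\<omega> \<notin> deviation_event (\<lambda>r \<omega>. - clipped r \<omega>) k"
    using assms(2,5) unfolding bad_event_def by auto
  then have "\<not> confidence \<le> \<theta> * (\<Sum>r\<in>{1..s}. clipped r \<omega>) - \<theta>\<^sup>2 * (\<Sum>r\<in>{1..s}. (clipped r \<omega>)\<^sup>2)"
    "\<not> confidence \<le> \<theta> * (\<Sum>r\<in>{1..s}. - clipped r \<omega>) - \<theta>\<^sup>2 * (\<Sum>r\<in>{1..s}. (- clipped r \<omega>)\<^sup>2)"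
    using assms(1,4) unfolding deviation_event_def \<theta>_def by blast+
  moreover have "clipped r \<omega> = increment r \<omega>" if "r \<in> {1..s}" for r
    using clipped_eq_increment assms(3,4) that by auto
  ultimately show "\<theta> * (\<Sum>r\<in>{1..s}. increment r \<omega>) - \<theta>\<^sup>2 * (\<Sum>r\<in>{1..s}. (increment r \<omega>)\<^sup>2) < confidence"
    and "\<theta> * - (\<Sum>r\<in>{1..s}. increment r \<omega>) - \<theta>\<^sup>2 * (\<Sum>r\<in>{1..s}. (increment r \<omega>)\<^sup>2) < confidence"
    by (simp_all add: sum_negf)
qed

lemma abs_sum_increment_le:
  assumes T: "1 \<le> T" and \<omega>: "\<omega> \<in> space M" "\<omega> \<notin> bad_event" "\<forall>r\<in>{1..T}. noise_bounded r \<omega>"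
    and t: "t \<in> {1..T}" and s: "s \<in> {1..t}"
  shows "\<bar>\<Sum>r\<in>{1..s}. increment r \<omega>\<bar> \<le> deviation_radius t \<omega>"
proof -
  define l where "l = log 2 (60 * log 2 (6 * real t) / (\<delta> / log 2 (4 * real T)))"
  have L: "1 \<le> confidence" "confidence \<le> l"
    unfolding confidence_def l_def using T t delta_pos delta_less_1
    by (intro one_le_ln_confidence ln_confidence_le_log2; simp)+
  have Y: "0 \<le> weighted_noise t \<omega>" unfolding weighted_noise_def by (intro sum_nonneg) auto
  have radius_eq: "deviation_radius t \<omega> = sqrt (16 * l * weighted_noise t \<omega> + noise_scale\<^sup>2 * (16 * l\<^sup>2))"
    unfolding deviation_radius_def A_fn_def B_fn_def l_def by (simp add: mult_ac)
  note V = sum_square_increment_le[OF \<omega>(3) t s]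
  show ?thesis
  proof (cases "noise_scale = 0")
    case True
    then have "(\<Sum>r\<in>{1..s}. (increment r \<omega>)\<^sup>2) = 0" using V by (simp add: sum_nonneg antisym)
    then have "(\<Sum>r\<in>{1..s}. increment r \<omega>) = 0" by (simp add: sum_nonneg_eq_0_iff)
    then show ?thesis using L Y unfolding radius_eq by simp
  next
    case False
    then have c: "0 < noise_scale" using noise_scale_nonneg by simp
    have "\<bar>\<Sum>r\<in>{1..s}. increment r \<omega>\<bar>
        \<le> max (4 * noise_scale * confidence) (3 * sqrt (confidence * min (weighted_noise t \<omega>) (real T * noise_scale\<^sup>2)))"
      using s t V grid_deviation_lt_confidence[OF \<omega>]
      by (intro abs_le_of_grid_deviation_bounds[OF L(1) c T]) (auto intro: sum_nonneg)
    also have "\<dots> \<le> deviation_radius t \<omega>"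
      unfolding radius_eq using c L Y by (intro max_le_sqrt_log_radius) auto
    finally show ?thesis .
  qed
qed

lemma deviation_le_outside_bad_event:
  assumes "1 \<le> T" "\<omega> \<in> space M" "\<omega> \<notin> bad_event" "\<forall>r\<in>{1..T}. noise_bounded r \<omega>"
    and t: "t \<in> {1..T}"
  shows "(\<Sum>s\<in>{1..t}. eta_hat s \<omega> * (noise_vec s \<omega> \<bullet> (w s \<omega> - wstar)))
    \<le> 2 * radius t \<omega> * deviation_radius t \<omega>"
proof -
  have "(\<Sum>s\<in>{1..t}. eta_hat s \<omega> * (noise_vec s \<omega> \<bullet> (w s \<omega> - wstar)))
      = (\<Sum>s\<in>{1..t}. radius s \<omega> * increment s \<omega>)"
    unfolding increment_def using radius_pos by (intro sum.cong) (auto simp: less_imp_neq[symmetric])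
  also have "\<dots> \<le> 2 * radius t \<omega> * deviation_radius t \<omega>"
    using radius_Suc radius_pos[THEN less_imp_le] t abs_sum_increment_le[OF assms]
    by (intro summation_by_parts_le) auto
  finally show ?thesis .
qed

lemma sets_deviation_bound:
  "{\<omega> \<in> space M. \<forall>t\<in>{1..T}. (\<Sum>s\<in>{1..t}. eta_hat s \<omega> * (noise_vec s \<omega> \<bullet> (w s \<omega> - wstar)))
      \<le> 2 * radius t \<omega> * deviation_radius t \<omega>} \<in> sets M"
proof -
  have [measurable]: "w s \<in> borel_measurable M" "eta_hat s \<in> borel_measurable M"
    "radius s \<in> borel_measurable M" "(\<lambda>\<omega>. G s \<omega>) \<in> borel_measurable M"
    "(\<lambda>\<omega>. gradf (w s \<omega>)) \<in> borel_measurable M" for s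
    by (auto intro!: measurable_from_past measurable_w_past[of s s] measurable_eta_hat_past[of s "Suc s"]
        measurable_radius_past[of s s] measurable_adaG_past[of g M s "Suc s"] measurable_g
        measurable_gradf_w_past[of s s])
  have [measurable]: "noise_vec s \<in> borel_measurable M" for s
    unfolding noise_vec_def using measurable_g by measurable
  have [measurable]: "weighted_noise t \<in> borel_measurable M" for t
    unfolding weighted_noise_def by (intro borel_measurable_sum) measurable
  have [measurable]: "(\<lambda>\<omega>. \<Sum>s\<in>{1..t}. eta_hat s \<omega> * (noise_vec s \<omega> \<bullet> (w s \<omega> - wstar)))
      \<in> borel_measurable M" for t
    by (intro borel_measurable_sum) measurable
  show ?thesis unfolding deviation_radius_def by measurable
qed

theorem prob_deviation_bound:
  "1 - \<delta> \<le> measure M {\<omega> \<in> space M. \<forall>t\<in>{1..T}.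
      (\<Sum>s\<in>{1..t}. eta_hat s \<omega> * ((gradf (w s \<omega>) - g s \<omega>) \<bullet> (w s \<omega> - wstar)))
      \<le> 2 * max (Max ((\<lambda>s. norm (w s \<omega> - wstar)) ` {1..t})) \<eta> *
          sqrt (A_fn t (\<delta> / log 2 (4 * real T)) *
                  (\<Sum>s\<in>{1..t}. (\<eta> / G (s - 1) \<omega>)\<^sup>2 * (norm (gradf (w s \<omega>) - g s \<omega>))\<^sup>2)
                + \<eta>\<^sup>2 * (\<sigma>0 / \<gamma> + \<sigma>1)\<^sup>2 * B_fn t (\<delta> / log 2 (4 * real T)))}"
  (is "_ \<le> measure M ?good")
proof (cases "T = 0")
  case True
  then show ?thesis using delta_pos by (simp add: prob_space)
next
  case False
  then have T: "1 \<le> T" by simp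
  have good: "?good = {\<omega> \<in> space M. \<forall>t\<in>{1..T}.
      (\<Sum>s\<in>{1..t}. eta_hat s \<omega> * (noise_vec s \<omega> \<bullet> (w s \<omega> - wstar))) \<le> 2 * radius t \<omega> * deviation_radius t \<omega>}"
    by (simp add: radius_def deviation_radius_def weighted_noise_def noise_vec_def noise_scale_def
        power_mult_distrib)
  have "AE \<omega> in M. \<omega> \<in> space M - ?good \<longrightarrow> \<omega> \<in> bad_event"
    using AE_noise_bounded
    by eventually_elim (use deviation_le_outside_bad_event[OF T] in \<open>auto simp only: good\<close>)
  then have "measure M (space M - ?good) \<le> measure M bad_event"
    using sets_bad_event[OF T] by (rule finite_measure_mono_AE)
  also have "\<dots> \<le> \<delta>" using T by (rule prob_bad_event_le)
  finally show ?thesis using prob_compl[OF sets_deviation_bound] unfolding good by simp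
qed

end

theorem lemma15:
  fixes M :: "'w measure"
    and f :: "'a::euclidean_space \<Rightarrow> real" and gradf :: "'a \<Rightarrow> 'a"
    and g :: "nat \<Rightarrow> 'w \<Rightarrow> 'a"
    and w1 wstar :: 'a
    and \<beta> \<eta> \<gamma> \<sigma>0 \<sigma>1 \<delta> :: real and T :: nat
  assumes "prob_space M"
    and grad: "\<And>x. (f has_derivative (\<lambda>h. gradf x \<bullet> h)) (at x)"
    and "smooth \<beta> gradf"
    and minimizer: "\<And>w. f wstar \<le> f w"
    and "\<eta> > 0" and "\<gamma> > 0" and "\<sigma>0 \<ge> 0" and "\<sigma>1 \<ge> 0"
    and meas: "\<And>s. g s \<in> borel_measurable M"
    and unbiased: "\<And>t v. t \<in> {1..T} \<Longrightarrow>
       AE \<omega> in M. real_cond_exp M (past M g t) (\<lambda>\<omega>. g t \<omega> \<bullet> v) \<omega>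
                    = gradf (adaW w1 \<eta> \<gamma> g \<omega> t) \<bullet> v"
    and noise: "\<And>t. t \<in> {1..T} \<Longrightarrow>
       AE \<omega> in M. (norm (g t \<omega> - gradf (adaW w1 \<eta> \<gamma> g \<omega> t)))\<^sup>2
                    \<le> \<sigma>0\<^sup>2 + \<sigma>1\<^sup>2 * (norm (gradf (adaW w1 \<eta> \<gamma> g \<omega> t)))\<^sup>2"
    and "0 < \<delta>" and "\<delta> < 1"
  shows "measure M {\<omega> \<in> space M. \<forall>t\<in>{1..T}.
      (\<Sum>s\<in>{1..t}. hat_eta \<eta> \<gamma> gradf w1 g \<omega> s *
          ((gradf (adaW w1 \<eta> \<gamma> g \<omega> s) - g s \<omega>) \<bullet> (adaW w1 \<eta> \<gamma> g \<omega> s - wstar)))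
      \<le> 2 * max (Max ((\<lambda>s. norm (adaW w1 \<eta> \<gamma> g \<omega> s - wstar)) ` {1..t})) \<eta> *
          sqrt (A_fn t (\<delta> / log 2 (4 * real T)) *
                  (\<Sum>s\<in>{1..t}. (\<eta> / adaG \<gamma> g \<omega> (s - 1))\<^sup>2 *
                       (norm (gradf (adaW w1 \<eta> \<gamma> g \<omega> s) - g s \<omega>))\<^sup>2)
                + \<eta>\<^sup>2 * (\<sigma>0 / \<gamma> + \<sigma>1)\<^sup>2 * B_fn t (\<delta> / log 2 (4 * real T)))}
    \<ge> 1 - \<delta>"
proof -
  interpret adasgd M gradf g w1 wstar \<beta> \<eta> \<gamma> \<sigma>0 \<sigma>1 \<delta> T
    by (intro adasgd.intro adasgd_axioms.intro) (fact assms)+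
  show ?thesis by (rule prob_deviation_bound)
qed

end
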